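(* Let $\tau,\ell,s$ be positive integers with $s\le\ell$ and $\tau+\ell m_{\mathrm H}<sn$. If Problem 1 (with parameters $s,\ell$) has a solution of degree $\tau$, then it has at least $(q^2)^{\delta(\tau)-1}$ solutions of degree $\tau$, where $$\delta(\tau)=(\tau+1)C_{\le\ell}-n\big[W_{<s}+sC_{\le\ell}-sC_{<s}\big]+m_{\mathrm H}W_{\le\ell}-gC_{\le\ell}.$$
   Context: Let $q$ be a prime power; the Hermitian curve over $\mathbb{F}_{q^2}$ has affine equation $Y^q+Y=X^{q+1}$, genus $g=\tfrac12q(q-1)$, affine rational points $P_1,\dots,P_n$ ($n=q^3$) and point at infinity $P_\infty$. $\mathcal{R}=\bigcup_{m\ge0}\mathcal{L}(mP_\infty)=\mathbb{F}_{q^2}[X,Y]/(Y^q+Y-X^{q+1})$ with basis $\{X^iY^j:i\ge0,0\le j<q\}$; $\deg_{\mathcal{H}}f=-v_{P_\infty}(f)$, so $\deg_{\mathcal{H}}(X^iY^j)=iq+j(q+1)$; $f\ne0$ is monic if the coefficient of its basis monomial of largest $\deg_{\mathcal{H}}$ is $1$. Fix integers $h\ge1$ and $m_{\mathrm H}$ with $2(g-1)<m_{\mathrm H}<n$. Given a received word $\mathbf{r}=(r_{i,j})\in\mathbb{F}_{q^2}^{h\times n}$, let $\mathbf{R}=(R_1,\dots,R_h)$, $R_i\in\mathcal{R}$, $\deg_{\mathcal{H}}R_i<n+2g$, $R_i(P_j)=r_{i,j}$; $G=X^{q^2}-X$. For $\mathbf{i},\mathbf{j}\in\mathbb{Z}_{\ge0}^h$: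 $|\mathbf{i}|=\sum_\mu i_\mu$, $\mathbf{i}\preceq\mathbf{j}$ componentwise, $\mathbf{a}^{\mathbf{i}}=\prod_\mu a_\mu^{i_\mu}$, $\binom{\mathbf{j}}{\mathbf{i}}=\prod_\mu\binom{j_\mu}{i_\mu}$. Problem 1: $\mathcal{I}=\{\mathbf{i}:|\mathbf{i}|<s\}$, $\mathcal{J}=\{\mathbf{j}:1\le|\mathbf{j}|\le\ell\}$, $A_{\mathbf{i},\mathbf{j}}=\binom{\mathbf{j}}{\mathbf{i}}\mathbf{R}^{\mathbf{j}-\mathbf{i}}G^{|\mathbf{i}|}$ ($=0$ if $\mathbf{i}\not\preceq\mathbf{j}$). A solution is a family $\lambda_{\mathbf{i}},\psi_{\mathbf{j}}\in\mathcal{R}$ with $\lambda_{\mathbf{0}}$ monic, $\psi_{\mathbf{j}}=\sum_{\mathbf{i}\in\mathcal{I}}\lambda_{\mathbf{i}}A_{\mathbf{i},\mathbf{j}}$ for $|\mathbf{j}|<s$, $\psi_{\mathbf{j}}\equiv\sum_{\mathbf{i}\in\mathcal{I}}\lambda_{\mathbf{i}}A_{\mathbf{i},\mathbf{j}}\bmod G^s$ for $|\mathbf{j}|\ge s$, $\deg_{\mathcal{H}}\lambda_{\mathbf{0}}\ge\deg_{\mathcal{H}}\lambda_{\mathbf{i}}-|\mathbf{i}|(2g-1)$ for all $\mathbf{i}\in\mathcal{I}$, and $\deg_{\mathcal{H}}\lambda_{\mathbf{0}}\ge\deg_{\mathcal{H}}\psi_{\mathbf{j}}-|\mathbf{j}|m_{\mathrm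 H}$ for all $\mathbf{j}\in\mathcal{J}$; its degree is $\deg_{\mathcal{H}}\lambda_{\mathbf{0}}$. Counting quantities: $C_{\le\ell}=\#\{\mathbf{j}\in\mathbb{Z}_{\ge0}^h:|\mathbf{j}|\le\ell\}$, $C_{<s}=\#\{\mathbf{i}\in\mathbb{Z}_{\ge0}^h:|\mathbf{i}|<s\}$, $W_{<s}=\sum_{|\mathbf{i}|<s}|\mathbf{i}|$, $W_{\le\ell}=\sum_{|\mathbf{j}|\le\ell}|\mathbf{j}|$ (sums over $\mathbb{Z}_{\ge0}^h$). *)

theory Defs
  imports "HOL-Computational_Algebra.Polynomial" "HOL-Computational_Algebra.Primes"
begin

text \<open>The coordinate ring R = F[X,Y]/(Y^q+Y-X^(q+1)) is represented inside the
bivariate polynomial ring 'a poly poly (outer variable Y, coefficients polynomials in X).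
Elements of R are the canonical representatives of Y-degree < q, i.e. linear
combinations of the basis X^i Y^j (0 <= j < q); equality in R is congruence
modulo the curve polynomial.\<close>

definition hcurve :: "nat \<Rightarrow> 'a::comm_ring_1 poly poly" where
  "hcurve q = monom 1 q + monom 1 1 - monom (monom 1 (q + 1)) 0"

definition inR :: "nat \<Rightarrow> 'a::comm_ring_1 poly poly \<Rightarrow> bool" where
  "inR q f \<longleftrightarrow> degree f < q"

definition eqR :: "nat \<Rightarrow> 'a::comm_ring_1 poly poly \<Rightarrow> 'a poly poly \<Rightarrow> bool" where
  "eqR q f g \<longleftrightarrow> hcurve q dvd (f - g)"

definition suppH :: "nat \<Rightarrow> 'a::comm_ring_1 poly poly \<Rightarrow> (nat \<times> nat) set" where
  "suppH q f = {(i, j). j < q \<and> coeff (coeff f j) i \<noteq> 0}"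

definition degH :: "nat \<Rightarrow> 'a::comm_ring_1 poly poly \<Rightarrow> nat" where
  "degH q f = Max ((\<lambda>(i, j). i * q + j * (q + 1)) ` suppH q f)"

definition monicH :: "nat \<Rightarrow> 'a::comm_ring_1 poly poly \<Rightarrow> bool" where
  "monicH q f \<longleftrightarrow> f \<noteq> 0 \<and>
     (\<forall>(i, j) \<in> suppH q f. i * q + j * (q + 1) = degH q f \<longrightarrow> coeff (coeff f j) i = 1)"

definition evalR :: "'a::comm_ring_1 poly poly \<Rightarrow> 'a \<Rightarrow> 'a \<Rightarrow> 'a" where
  "evalR f x y = poly (poly f [:y:]) x"

definition Gpol :: "nat \<Rightarrow> 'a::comm_ring_1 poly poly" where
  "Gpol q = [: monom 1 (q ^ 2) - monom 1 1 :]"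

definition genusH :: "nat \<Rightarrow> nat" where
  "genusH q = q * (q - 1) div 2"

definition hermitian_points :: "nat \<Rightarrow> ('a::comm_ring_1 \<times> 'a) set" where
  "hermitian_points q = {(x, y). y ^ q + y = x ^ (q + 1)}"

text \<open>Multi-indices in Z_{>=0}^h are lists of length h.\<close>
definition preceq :: "nat list \<Rightarrow> nat list \<Rightarrow> bool" where
  "preceq i j \<longleftrightarrow> length i = length j \<and> (\<forall>\<mu> < length i. i ! \<mu> \<le> j ! \<mu>)"

definition binomv :: "nat list \<Rightarrow> nat list \<Rightarrow> nat" where
  "binomv i j = (\<Prod>\<mu> < length j. (j ! \<mu>) choose (i ! \<mu>))"

definition Rpowv :: "(nat \<Rightarrow> 'a::comm_ring_1 poly poly) \<Rightarrow> nat list \<Rightarrow> nat list \<Rightarrow> 'a poly poly" where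
  "Rpowv Rv i j = (\<Prod>\<mu> < length j. Rv \<mu> ^ (j ! \<mu> - i ! \<mu>))"

definition Aent :: "nat \<Rightarrow> (nat \<Rightarrow> 'a::comm_ring_1 poly poly) \<Rightarrow> nat list \<Rightarrow> nat list \<Rightarrow> 'a poly poly" where
  "Aent q Rv i j = (if preceq i j
      then of_nat (binomv i j) * Rpowv Rv i j * Gpol q ^ sum_list i else 0)"

definition Iset :: "nat \<Rightarrow> nat \<Rightarrow> nat list set" where
  "Iset h s = {i. length i = h \<and> sum_list i < s}"

definition Jset :: "nat \<Rightarrow> nat \<Rightarrow> nat list set" where
  "Jset h l = {j. length j = h \<and> 1 \<le> sum_list j \<and> sum_list j \<le> l}"

definition combo :: "nat \<Rightarrow> nat \<Rightarrow> nat \<Rightarrow> (nat \<Rightarrow> 'a::comm_ring_1 poly poly)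
    \<Rightarrow> (nat list \<Rightarrow> 'a poly poly) \<Rightarrow> nat list \<Rightarrow> 'a poly poly" where
  "combo q h s Rv lam j = (\<Sum>i \<in> Iset h s. lam i * Aent q Rv i j)"

text \<open>A solution of Problem 1: families lambda (on I) and psi (on J) of elements of R,
extended by 0 outside their index sets.\<close>
definition is_solution :: "nat \<Rightarrow> nat \<Rightarrow> nat \<Rightarrow> nat \<Rightarrow> int \<Rightarrow> (nat \<Rightarrow> 'a::comm_ring_1 poly poly)
    \<Rightarrow> (nat list \<Rightarrow> 'a poly poly) \<Rightarrow> (nat list \<Rightarrow> 'a poly poly) \<Rightarrow> bool" where
  "is_solution q h s l mH Rv lam psi \<longleftrightarrow>
     (\<forall>i. i \<notin> Iset h s \<longrightarrow> lam i = 0) \<and>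
     (\<forall>j. j \<notin> Jset h l \<longrightarrow> psi j = 0) \<and>
     (\<forall>i \<in> Iset h s. inR q (lam i)) \<and>
     (\<forall>j \<in> Jset h l. inR q (psi j)) \<and>
     monicH q (lam (replicate h 0)) \<and>
     (\<forall>j \<in> Jset h l. sum_list j < s \<longrightarrow> eqR q (psi j) (combo q h s Rv lam j)) \<and>
     (\<forall>j \<in> Jset h l. s \<le> sum_list j \<longrightarrow>
        (\<exists>t. eqR q (psi j) (combo q h s Rv lam j + t * Gpol q ^ s))) \<and>
     (\<forall>i \<in> Iset h s. lam i \<noteq> 0 \<longrightarrow>
        int (degH q (lam i)) - int (sum_list i) * (2 * int (genusH q) - 1)
          \<le> int (degH q (lam (replicate h 0)))) \<and>
     (\<forall>j \<in> Jset h l. psi j \<noteq> 0 \<longrightarrow>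
        int (degH q (psi j)) - int (sum_list j) * mH \<le> int (degH q (lam (replicate h 0))))"

definition solutions_of_degree :: "nat \<Rightarrow> nat \<Rightarrow> nat \<Rightarrow> nat \<Rightarrow> int \<Rightarrow> (nat \<Rightarrow> 'a::comm_ring_1 poly poly)
    \<Rightarrow> nat \<Rightarrow> ((nat list \<Rightarrow> 'a poly poly) \<times> (nat list \<Rightarrow> 'a poly poly)) set" where
  "solutions_of_degree q h s l mH Rv \<tau> =
     {(lam, psi). is_solution q h s l mH Rv lam psi \<and> degH q (lam (replicate h 0)) = \<tau>}"

definition Cle :: "nat \<Rightarrow> nat \<Rightarrow> nat" where
  "Cle h l = card {j::nat list. length j = h \<and> sum_list j \<le> l}"

definition Clt :: "nat \<Rightarrow> nat \<Rightarrow> nat" where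
  "Clt h s = card {i::nat list. length i = h \<and> sum_list i < s}"

definition Wlt :: "nat \<Rightarrow> nat \<Rightarrow> nat" where
  "Wlt h s = (\<Sum>i \<in> {i::nat list. length i = h \<and> sum_list i < s}. sum_list i)"

definition Wle :: "nat \<Rightarrow> nat \<Rightarrow> nat" where
  "Wle h l = (\<Sum>j \<in> {j::nat list. length j = h \<and> sum_list j \<le> l}. sum_list j)"

definition deltaH :: "nat \<Rightarrow> nat \<Rightarrow> nat \<Rightarrow> nat \<Rightarrow> int \<Rightarrow> nat \<Rightarrow> int" where
  "deltaH q h s l mH \<tau> =
     (int \<tau> + 1) * int (Cle h l)
     - int (q ^ 3) * (int (Wlt h s) + int s * int (Cle h l) - int s * int (Clt h s))
     + mH * int (Wle h l) - int (genusH q) * int (Cle h l)"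

end

(*
  Fix one solution (lambda, psi) of degree tau.  Adding to it a solution of the homogeneous
  problem in which lambda_0 has degree below tau gives again a solution of degree tau, because
  the leading monomials of lambda_0 are untouched.  Such perturbations come from a free choice of
  lambda_i in L((tau + |i| (2g - 1)) P_inf), with tau - 1 instead of tau for i = 0, and of psi_j in
  L((tau + |j| m_H) P_inf) for |j| >= s, subject to linear conditions over F_(q^2): for |j| < s
  the entry psi_j is forced to be the reduction of sum_i lambda_i A_(i,j), a function in
  L((tau + |j| (n + 2g - 1)) P_inf), and its at most |j| (n + 2g - 1 - m_H) coefficients above
  weight tau + |j| m_H must vanish; for |j| >= s each of the q Y-coefficients of
  psi_j - sum_i lambda_i A_(i,j) must vanish modulo G^s, which is s q^2 conditions.  Distinct
  perturbations with the same values of these linear maps differ by an admissible perturbation,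
  so there are at least (q^2)^(free - conditions) admissible ones, and Riemann's inequality
  dim L(m P_inf) >= m + 1 - g shows that free - conditions >= delta(tau) - 1.
*)
theory Submission
  imports Defs "HOL-Library.FuncSet" "HOL-Library.Function_Algebras" "HOL-Library.Product_Plus"
begin

section \<open>Hermitian weights\<close>

definition hweight_le :: "nat \<Rightarrow> nat \<Rightarrow> 'a::zero poly poly \<Rightarrow> bool" where
  "hweight_le q m f \<longleftrightarrow> (\<forall>i j. coeff (coeff f j) i \<noteq> 0 \<longrightarrow> i * q + j * (q + 1) \<le> m)"

lemma hweight_le_0 [simp]: "hweight_le q m 0"
  by (simp add: hweight_le_def)

lemma hweight_le_mono: "hweight_le q m f \<Longrightarrow> m \<le> m' \<Longrightarrow> hweight_le q m' f"
  unfolding hweight_le_def by (meson le_trans)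

lemma hweight_le_add: "hweight_le q m f \<Longrightarrow> hweight_le q m g \<Longrightarrow> hweight_le q m (f + g)"
  unfolding hweight_le_def by (metis add.right_neutral coeff_add)

lemma hweight_le_diff:
  "hweight_le q m f \<Longrightarrow> hweight_le q m g \<Longrightarrow> hweight_le q m (f - g :: 'a::ab_group_add poly poly)"
  unfolding hweight_le_def by (metis coeff_diff diff_self)

lemma hweight_le_sum: "(\<And>x. x \<in> A \<Longrightarrow> hweight_le q m (f x)) \<Longrightarrow> hweight_le q m (\<Sum>x\<in>A. f x)"
  by (induction A rule: infinite_finite_induct) (auto intro: hweight_le_add)

lemma hweight_le_mult:
  fixes f g :: "'a::comm_semiring_0 poly poly"
  assumes "hweight_le q m f" "hweight_le q k g"
  shows "hweight_le q (m + k) (f * g)"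
  unfolding hweight_le_def
proof (intro allI impI)
  fix i j
  assume "coeff (coeff (f * g) j) i \<noteq> 0"
  moreover have "coeff (coeff (f * g) j) i =
      (\<Sum>a\<le>j. \<Sum>b\<le>i. coeff (coeff f a) b * coeff (coeff g (j - a)) (i - b))"
    by (simp add: coeff_mult coeff_sum)
  ultimately obtain a b where ab: "a \<le> j" "b \<le> i"
      "coeff (coeff f a) b * coeff (coeff g (j - a)) (i - b) \<noteq> 0"
    by (metis (no_types, lifting) atMost_iff sum.neutral)
  then have "b * q + a * (q + 1) \<le> m" "(i - b) * q + (j - a) * (q + 1) \<le> k"
    using assms unfolding hweight_le_def by (metis mult_not_zero)+
  with ab(1,2) show "i * q + j * (q + 1) \<le> m + k"
    by (simp add: diff_mult_distrib)
qed

lemma hweight_le_power: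
  "hweight_le q m (f :: 'a::comm_semiring_1 poly poly) \<Longrightarrow> hweight_le q (k * m) (f ^ k)"
proof (induction k)
  case 0
  then show ?case by (auto simp: hweight_le_def coeff_1 split: if_splits)
next
  case (Suc k)
  then show ?case using hweight_le_mult[of q m f "k * m" "f ^ k"] by (simp add: add.commute)
qed

lemma hweight_le_prod:
  "(\<And>x. x \<in> A \<Longrightarrow> hweight_le q (m x) (f x :: 'a::comm_semiring_1 poly poly))
     \<Longrightarrow> hweight_le q (\<Sum>x\<in>A. m x) (\<Prod>x\<in>A. f x)"
proof (induction A rule: infinite_finite_induct)
  case (insert x F)
  then show ?case by (simp add: hweight_le_mult)
qed (auto simp: hweight_le_def coeff_1 split: if_splits)

lemma hweight_le_of_nat: "hweight_le q 0 (of_nat c :: 'a::comm_semiring_1 poly poly)"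
  by (auto simp: hweight_le_def of_nat_poly coeff_pCons split: nat.splits)

lemma hweight_le_Gpol: "q \<ge> 1 \<Longrightarrow> hweight_le q (q ^ 3) (Gpol q :: 'a::comm_ring_1 poly poly)"
  by (auto simp: hweight_le_def Gpol_def coeff_pCons coeff_monom power3_eq_cube power2_eq_square
      split: nat.splits if_splits)

lemma hweight_le_hcurve: "q \<ge> 2 \<Longrightarrow> hweight_le q (q * (q + 1)) (hcurve q :: 'a::comm_ring_1 poly poly)"
  by (auto simp: hweight_le_def hcurve_def coeff_monom split: if_splits)

lemma hweight_le_ex: "\<exists>m. hweight_le q m f"
proof
  let ?m = "(\<Sum>j\<le>degree f. degree (coeff f j) * q) + degree f * (q + 1)"
  show "hweight_le q ?m f" unfolding hweight_le_def
  proof (intro allI impI)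
    fix i j assume nz: "coeff (coeff f j) i \<noteq> 0"
    then have j: "j \<le> degree f" by (metis coeff_0 le_degree)
    have "i \<le> degree (coeff f j)" using nz le_degree by blast
    then have "i * q \<le> degree (coeff f j) * q" by simp
    also have "\<dots> \<le> (\<Sum>j\<le>degree f. degree (coeff f j) * q)"
      using j by (intro member_le_sum) auto
    finally show "i * q + j * (q + 1) \<le> ?m" using j by (simp add: add_mono)
  qed
qed

section \<open>Reduction modulo the curve equation\<close>

lemma coeff_hcurve: "q \<ge> 2 \<Longrightarrow> coeff (hcurve q :: 'a::comm_ring_1 poly poly) k =
   (if k = q then 1 else if k = 1 then 1 else if k = 0 then - monom 1 (q + 1) else 0)"
  by (auto simp: hcurve_def coeff_monom)

lemma degree_hcurve: "q \<ge> 2 \<Longrightarrow> degree (hcurve q :: 'a::comm_ring_1 poly poly) = q"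
  by (intro antisym degree_le le_degree) (auto simp: coeff_hcurve)

lemma lead_coeff_hcurve: "q \<ge> 2 \<Longrightarrow> lead_coeff (hcurve q :: 'a::comm_ring_1 poly poly) = 1"
  by (simp add: degree_hcurve coeff_hcurve)

lemma hcurve_neq_0: "q \<ge> 2 \<Longrightarrow> hcurve q \<noteq> (0 :: 'a::comm_ring_1 poly poly)"
  using lead_coeff_hcurve[of q] by (metis leading_coeff_0_iff zero_neq_one)

lemma hcurve_dvd_imp_eq:
  fixes r1 r2 :: "'a::idom poly poly"
  assumes q: "q \<ge> 2" and "degree r1 < q" "degree r2 < q" "hcurve q dvd (r1 - r2)"
  shows "r1 = r2"
proof (rule ccontr)
  assume ne: "r1 \<noteq> r2"
  from assms(4) obtain t where t: "r1 - r2 = hcurve q * t" by (auto elim: dvdE)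
  with ne have "t \<noteq> 0" by auto
  then have "degree (r1 - r2) = q + degree t"
    unfolding t using degree_mult_eq[OF hcurve_neq_0[OF q] \<open>t \<noteq> 0\<close>] degree_hcurve[OF q] by simp
  moreover have "degree (r1 - r2) < q" using assms(2,3) by (rule degree_diff_less)
  ultimately show False by simp
qed

text \<open>Cancelling the leading Y-term against a multiple of the curve equation trades
  Y^q for X^(q+1) - Y, which does not increase the weight.\<close>
lemma hcurve_reduce_step:
  fixes f :: "'a::idom poly poly"
  assumes q: "q \<ge> 2" and f: "hweight_le q m f" and d: "q \<le> degree f"
  defines "f' \<equiv> f - monom (lead_coeff f) (degree f - q) * hcurve q"
  shows "degree f' < degree f" "hweight_le q m f'" "hcurve q dvd (f - f')"
proof -
  let ?d = "degree f" and ?c = "lead_coeff f" and ?g = "monom (lead_coeff f) (degree f - q) * hcurve q"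
  have "f \<noteq> 0" using q d by auto
  then have c: "?c \<noteq> 0" by simp
  then obtain i0 where "coeff ?c i0 \<noteq> 0" by (metis coeff_0 poly_eqI)
  then have "i0 * q + ?d * (q + 1) \<le> m" using f unfolding hweight_le_def by blast
  moreover have dd: "?d * (q + 1) = (?d - q) * (q + 1) + q * (q + 1)"
    using d by (metis add_mult_distrib le_add_diff_inverse2)
  ultimately have m: "q * (q + 1) \<le> m" by linarith
  have "hweight_le q (m - q * (q + 1)) (monom ?c (?d - q))"
    unfolding hweight_le_def
  proof (intro allI impI)
    fix i j assume "coeff (coeff (monom ?c (?d - q)) j) i \<noteq> 0"
    then have "j = ?d - q" "coeff ?c i \<noteq> 0" by (auto simp: coeff_monom split: if_splits)
    moreover have "i * q + ?d * (q + 1) \<le> m" if "coeff ?c i \<noteq> 0"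
      using f that unfolding hweight_le_def by blast
    ultimately have "i * q + (?d - q) * (q + 1) \<le> m - q * (q + 1)" using dd by linarith
    with \<open>j = ?d - q\<close> show "i * q + j * (q + 1) \<le> m - q * (q + 1)" by simp
  qed
  from hweight_le_mult[OF this hweight_le_hcurve[OF q]] m
  have "hweight_le q m ?g" by simp
  then show "hweight_le q m f'" unfolding f'_def using f by (rule hweight_le_diff[rotated])
  have dm: "degree (monom ?c (?d - q)) = ?d - q" using c by (rule degree_monom_eq)
  have deg_g: "degree ?g = ?d"
    using degree_mult_eq[OF _ hcurve_neq_0[OF q], of "monom ?c (?d - q)"] dm c d
    by (simp add: degree_hcurve[OF q])
  have "coeff ?g (degree (monom ?c (?d - q)) + degree (hcurve q :: 'a poly poly)) = ?c"
    unfolding coeff_mult_degree_sum using dm by (simp add: lead_coeff_hcurve[OF q])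
  then have lc_g: "coeff ?g ?d = ?c" using dm d by (simp add: degree_hcurve[OF q])
  have "degree f' \<le> ?d" unfolding f'_def using degree_diff_le[of f ?d ?g] deg_g by simp
  moreover have "coeff f' ?d = 0" unfolding f'_def using lc_g by simp
  moreover have "?d \<noteq> 0" using d q by simp
  ultimately show "degree f' < ?d"
    by (metis le_neq_implies_less leading_coeff_0_iff degree_0)
  show "hcurve q dvd (f - f')" by (simp add: f'_def)
qed

lemma hcurve_reduce_ex:
  fixes f :: "'a::idom poly poly"
  assumes q: "q \<ge> 2"
  shows "hweight_le q m f \<Longrightarrow> \<exists>r. degree r < q \<and> hcurve q dvd (f - r) \<and> hweight_le q m r"
proof (induction "degree f" arbitrary: f rule: less_induct)
  case less
  show ?case
  proof (cases "degree f < q")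
    case True
    with less.prems show ?thesis by (intro exI[of _ f]) auto
  next
    case False
    let ?f' = "f - monom (lead_coeff f) (degree f - q) * hcurve q"
    note step = hcurve_reduce_step[OF q less.prems, folded not_less, OF False]
    obtain r where r: "degree r < q" "hcurve q dvd (?f' - r)" "hweight_le q m r"
      using less.hyps[OF step(1) step(2)] by blast
    have "hcurve q dvd ((f - ?f') + (?f' - r))" using step(3) r(2) by (rule dvd_add)
    with r show ?thesis by auto
  qed
qed

definition hred :: "nat \<Rightarrow> 'a::idom poly poly \<Rightarrow> 'a poly poly" where
  "hred q f = (THE r. degree r < q \<and> hcurve q dvd (f - r))"

lemma hred_eqI:
  fixes f :: "'a::idom poly poly"
  assumes q: "q \<ge> 2" and "degree r < q" "hcurve q dvd (f - r)"
  shows "hred q f = r"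
  unfolding hred_def
proof (rule the_equality)
  fix r' assume r': "degree r' < q \<and> hcurve q dvd (f - r')"
  have "hcurve q dvd ((f - r) - (f - r'))" using assms(3) r' dvd_diff by blast
  then have "hcurve q dvd (r' - r)" by simp
  then show "r' = r" using hcurve_dvd_imp_eq[OF q, of r' r] assms(2) r' by blast
qed (use assms in blast)

lemma hred_hweight_le:
  fixes f :: "'a::idom poly poly"
  assumes q: "q \<ge> 2" and "hweight_le q m f"
  shows "hweight_le q m (hred q f)"
proof -
  obtain r where r: "degree r < q" "hcurve q dvd (f - r)" "hweight_le q m r"
    using hcurve_reduce_ex[OF assms] by blast
  with hred_eqI[OF q r(1,2)] show ?thesis by simp
qed

lemma
  fixes f :: "'a::idom poly poly"
  assumes q: "q \<ge> 2"
  shows degree_hred: "degree (hred q f) < q"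
    and hcurve_dvd_hred: "hcurve q dvd (f - hred q f)"
proof -
  obtain m where "hweight_le q m f" using hweight_le_ex by blast
  then obtain r where "degree r < q" "hcurve q dvd (f - r)" using hcurve_reduce_ex[OF q] by blast
  with hred_eqI[OF q this] show "degree (hred q f) < q" "hcurve q dvd (f - hred q f)" by simp_all
qed

lemma hred_diff:
  assumes q: "q \<ge> 2" shows "hred q (f - g) = hred q f - hred q (g :: 'a::idom poly poly)"
proof (rule hred_eqI[OF q])
  show "degree (hred q f - hred q g) < q" by (intro degree_diff_less degree_hred[OF q])
  have "hcurve q dvd ((f - hred q f) - (g - hred q g))"
    using hcurve_dvd_hred[OF q] by (rule dvd_diff) (rule hcurve_dvd_hred[OF q])
  then show "hcurve q dvd (f - g - (hred q f - hred q g))" by (simp add: algebra_simps)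
qed

lemma finite_suppH: "finite (suppH q f)"
proof (rule finite_subset)
  show "suppH q f \<subseteq> {..(\<Sum>j<q. degree (coeff f j))} \<times> {..<q}"
  proof clarify
    fix i j assume "(i, j) \<in> suppH q f"
    then have j: "j < q" and "i \<le> degree (coeff f j)" by (auto simp: suppH_def le_degree)
    moreover have "degree (coeff f j) \<le> (\<Sum>j<q. degree (coeff f j))"
      using j by (intro member_le_sum) auto
    ultimately show "i \<in> {..(\<Sum>j<q. degree (coeff f j))} \<and> j \<in> {..<q}" by auto
  qed
qed auto

lemma suppH_eq_empty_iff: "degree f < q \<Longrightarrow> suppH q f = {} \<longleftrightarrow> f = 0"
proof
  assume d: "degree f < q" and supp: "suppH q f = {}"
  show "f = 0"
  proof (rule ccontr)
    assume "f \<noteq> 0"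
    then obtain i where "coeff (lead_coeff f) i \<noteq> 0" by (metis leading_coeff_0_iff poly_eqI coeff_0)
    with d supp show False by (auto simp: suppH_def)
  qed
qed (auto simp: suppH_def)

lemma hweight_le_iff_suppH:
  "degree f < q \<Longrightarrow> hweight_le q m f \<longleftrightarrow> (\<forall>(i, j) \<in> suppH q f. i * q + j * (q + 1) \<le> m)"
proof -
  assume "degree f < q"
  then have "j < q" if "coeff (coeff f j) i \<noteq> 0" for i j
    using that le_degree[of f j] by (metis coeff_0 le_less_trans)
  then show ?thesis unfolding hweight_le_def suppH_def by auto
qed

lemma degH_le_iff:
  assumes "degree f < q" "f \<noteq> 0"
  shows "degH q f \<le> m \<longleftrightarrow> hweight_le q m f"
  unfolding degH_def hweight_le_iff_suppH[OF assms(1)]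
  using finite_suppH suppH_eq_empty_iff[OF assms(1)] assms(2) by (subst Max_le_iff) auto

lemma degH_ge: "(i, j) \<in> suppH q f \<Longrightarrow> i * q + j * (q + 1) \<le> degH q f"
  unfolding degH_def using finite_suppH by (intro Max_ge) force+

lemma degH_attained:
  assumes "degree f < q" "f \<noteq> 0"
  obtains i j where "(i, j) \<in> suppH q f" "i * q + j * (q + 1) = degH q f"
proof -
  have "degH q f \<in> (\<lambda>(i, j). i * q + j * (q + 1)) ` suppH q f"
    unfolding degH_def using finite_suppH suppH_eq_empty_iff[OF assms(1)] assms(2) by (intro Max_in) auto
  then show ?thesis using that by auto
qed

lemma monicH_add_lower:
  fixes f v :: "'a::comm_ring_1 poly poly"
  assumes f: "degree f < q" "monicH q f" "degH q f = t"
    and v: "degree v < q" "hweight_le q (t - 1) v" and t: "t \<ge> 1"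
  shows "monicH q (f + v)" "degH q (f + v) = t"
proof -
  have f0: "f \<noteq> 0" using f(2) by (simp add: monicH_def)
  have dfv: "degree (f + v) < q" using f(1) v(1) by (rule degree_add_less)
  have top: "coeff (coeff (f + v) j) i = coeff (coeff f j) i" if "i * q + j * (q + 1) = t" for i j
    using v(2) that t unfolding hweight_le_def by force
  obtain i0 j0 where ij0: "(i0, j0) \<in> suppH q f" "i0 * q + j0 * (q + 1) = t"
    using degH_attained[OF f(1) f0] f(3) by metis
  then have ij0': "(i0, j0) \<in> suppH q (f + v)" using top by (simp add: suppH_def)
  then have fv0: "f + v \<noteq> 0" by (auto simp: suppH_def simp del: coeff_add)
  have "hweight_le q t f" using degH_le_iff[OF f(1) f0, of t] f(3) by simp
  moreover have "hweight_le q t v" using hweight_le_mono[OF v(2)] by simp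
  ultimately have "degH q (f + v) \<le> t" using degH_le_iff[OF dfv fv0] hweight_le_add by blast
  moreover have "t \<le> degH q (f + v)" using degH_ge[OF ij0'] ij0(2) by simp
  ultimately show deg: "degH q (f + v) = t" by simp
  show "monicH q (f + v)" unfolding monicH_def
  proof (intro conjI fv0 ballI, clarify)
    fix i j assume "(i, j) \<in> suppH q (f + v)" "i * q + j * (q + 1) = degH q (f + v)"
    with f(2,3) deg top show "coeff (coeff (f + v) j) i = 1" by (auto simp: monicH_def suppH_def)
  qed
qed

section \<open>Riemann--Roch spaces\<close>

text \<open>L(m P_\<infinity>), represented by canonical representatives.\<close>
definition Lspace :: "nat \<Rightarrow> nat \<Rightarrow> 'a::zero poly poly set" where
  "Lspace q m = {f. degree f < q \<and> hweight_le q m f}"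

lemma Lspace_add: "f \<in> Lspace q m \<Longrightarrow> g \<in> Lspace q m \<Longrightarrow> f + g \<in> Lspace q m"
  unfolding Lspace_def by (auto intro: degree_add_less hweight_le_add)

lemma Lspace_diff:
  "f \<in> Lspace q m \<Longrightarrow> g \<in> Lspace q m \<Longrightarrow> (f - g :: 'a::ab_group_add poly poly) \<in> Lspace q m"
  unfolding Lspace_def by (auto intro: degree_diff_less hweight_le_diff)

lemma Lspace_mono: "f \<in> Lspace q m \<Longrightarrow> m \<le> m' \<Longrightarrow> f \<in> Lspace q m'"
  unfolding Lspace_def using hweight_le_mono by blast

lemma Lspace_iff_degH: "degree f < q \<Longrightarrow> f \<in> Lspace q m \<longleftrightarrow> (f \<noteq> 0 \<longrightarrow> degH q f \<le> m)"
  unfolding Lspace_def using degH_le_iff by (cases "f = 0") auto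

lemma Lspace_iff_inR_degH: "f \<in> Lspace q m \<longleftrightarrow> inR q f \<and> (f \<noteq> 0 \<longrightarrow> degH q f \<le> m)"
  using Lspace_iff_degH[of f q m] by (auto simp: inR_def Lspace_def)

definition hexps :: "nat \<Rightarrow> nat \<Rightarrow> (nat \<times> nat) set" where
  "hexps q m = {(i, j). j < q \<and> i * q + j * (q + 1) \<le> m}"

lemma finite_hexps: "q \<ge> 1 \<Longrightarrow> finite (hexps q m)"
proof (rule finite_subset)
  assume "q \<ge> 1"
  show "hexps q m \<subseteq> {..m} \<times> {..<q}"
  proof clarify
    fix i j assume "(i, j) \<in> hexps q m"
    then have ij: "j < q" "i * q \<le> m" by (auto simp: hexps_def)
    have "i \<le> i * q" using \<open>q \<ge> 1\<close> by simp
    then have "i \<le> m" using ij(2) by linarith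
    with ij(1) show "i \<in> {..m} \<and> j \<in> {..<q}" by simp
  qed
qed auto

definition of_coeffs :: "(nat \<times> nat) set \<Rightarrow> (nat \<times> nat \<Rightarrow> 'a::comm_monoid_add) \<Rightarrow> 'a poly poly" where
  "of_coeffs D c = (\<Sum>p\<in>D. monom (monom (c p) (fst p)) (snd p))"

lemma coeff_of_coeffs:
  "finite D \<Longrightarrow> coeff (coeff (of_coeffs D c) j) i = (if (i, j) \<in> D then c (i, j) else 0)"
proof -
  have "coeff (coeff (of_coeffs D c) j) i = (\<Sum>p\<in>D. if p = (i, j) then c p else 0)"
    unfolding of_coeffs_def coeff_sum by (intro sum.cong) (auto simp: coeff_monom)
  then show "finite D \<Longrightarrow> ?thesis" by (simp add: sum.delta')
qed

lemma of_coeffs_restrict: "of_coeffs D (restrict c D) = of_coeffs D c"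
  unfolding of_coeffs_def by (intro sum.cong) auto

lemma Lspace_eq_of_coeffs:
  assumes q: "q \<ge> 1" and f: "f \<in> Lspace q m"
  shows "f = of_coeffs (hexps q m) (\<lambda>(i, j). coeff (coeff f j) i)"
proof (intro poly_eqI)
  fix j i
  have "coeff (coeff f j) i = 0" if "(i, j) \<notin> hexps q m"
  proof (rule ccontr)
    assume nz: "coeff (coeff f j) i \<noteq> 0"
    then have "j \<le> degree f" by (metis coeff_0 le_degree)
    then have "j < q" using f by (simp add: Lspace_def)
    moreover have "i * q + j * (q + 1) \<le> m" using f nz by (auto simp: Lspace_def hweight_le_def)
    ultimately show False using that by (simp add: hexps_def)
  qed
  then show "coeff (coeff f j) i = coeff (coeff (of_coeffs (hexps q m) (\<lambda>(i, j). coeff (coeff f j) i)) j) i"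
    by (simp add: coeff_of_coeffs[OF finite_hexps[OF q]])
qed

lemma of_coeffs_hexps_in_Lspace:
  assumes q: "q \<ge> 1"
  shows "of_coeffs (hexps q m) c \<in> Lspace q m"
proof -
  let ?f = "of_coeffs (hexps q m) c"
  have f: "coeff (coeff ?f j) i = (if (i, j) \<in> hexps q m then c (i, j) else 0)" for i j
    by (simp add: coeff_of_coeffs[OF finite_hexps[OF q]])
  have "(i, j) \<notin> hexps q m" if "q - 1 < j" for i j
  proof -
    have "\<not> j < q" using that q by linarith
    then show ?thesis by (simp add: hexps_def)
  qed
  then have "coeff ?f j = 0" if "q - 1 < j" for j using that by (intro poly_eqI) (simp add: f)
  then have "degree ?f \<le> q - 1" by (intro degree_le) auto
  then have "degree ?f < q" using q by simp
  moreover have "hweight_le q m ?f" unfolding hweight_le_def f by (simp add: hexps_def)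
  ultimately show ?thesis by (simp add: Lspace_def)
qed

lemma bij_betw_of_coeffs_Lspace:
  assumes q: "q \<ge> 1"
  shows "bij_betw (of_coeffs (hexps q m)) (PiE (hexps q m) (\<lambda>_. UNIV))
           (Lspace q m :: 'a::comm_monoid_add poly poly set)"
proof (rule bij_betw_imageI)
  note cf = coeff_of_coeffs[OF finite_hexps[OF q]]
  show "inj_on (of_coeffs (hexps q m)) (PiE (hexps q m) (\<lambda>_. UNIV))"
  proof (rule inj_onI)
    fix c d assume c: "c \<in> PiE (hexps q m) (\<lambda>_. UNIV)" and d: "d \<in> PiE (hexps q m) (\<lambda>_. UNIV)"
      and eq: "of_coeffs (hexps q m) c = of_coeffs (hexps q m) d"
    show "c = d"
    proof (rule PiE_ext[OF c d], clarify)
      fix i j assume "(i, j) \<in> hexps q m"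
      then show "c (i, j) = d (i, j)" using arg_cong[OF eq, of "\<lambda>f. coeff (coeff f j) i"] by (simp add: cf)
    qed
  qed
  show "of_coeffs (hexps q m) ` PiE (hexps q m) (\<lambda>_. UNIV) = (Lspace q m :: 'a poly poly set)"
  proof (intro equalityI subsetI)
    fix f :: "'a poly poly" assume "f \<in> of_coeffs (hexps q m) ` PiE (hexps q m) (\<lambda>_. UNIV)"
    then obtain c where "f = of_coeffs (hexps q m) c" by blast
    then show "f \<in> Lspace q m" by (simp add: of_coeffs_hexps_in_Lspace[OF q])
  next
    fix f :: "'a poly poly" assume "f \<in> Lspace q m"
    then have "f = of_coeffs (hexps q m) (restrict (\<lambda>(i, j). coeff (coeff f j) i) (hexps q m))"
      unfolding of_coeffs_restrict by (rule Lspace_eq_of_coeffs[OF q])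
    moreover have "restrict (\<lambda>(i, j). coeff (coeff f j) i) (hexps q m) \<in> PiE (hexps q m) (\<lambda>_. UNIV)"
      by simp
    ultimately show "f \<in> of_coeffs (hexps q m) ` PiE (hexps q m) (\<lambda>_. UNIV)" by (rule image_eqI)
  qed
qed

lemma
  assumes "q \<ge> 1"
  shows card_Lspace:
      "card (Lspace q m :: 'a::{comm_ring_1,finite} poly poly set) = card (UNIV :: 'a set) ^ card (hexps q m)"
    and finite_Lspace: "finite (Lspace q m :: 'a::{comm_ring_1,finite} poly poly set)"
proof -
  note bij = bij_betw_of_coeffs_Lspace[OF assms, of m, where 'a='a]
  show "card (Lspace q m :: 'a poly poly set) = card (UNIV :: 'a set) ^ card (hexps q m)"
    using bij_betw_same_card[OF bij] by (simp add: card_PiE finite_hexps[OF assms])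
  show "finite (Lspace q m :: 'a poly poly set)"
    using bij_betw_finite[OF bij] by (simp add: finite_PiE finite_hexps[OF assms])
qed

lemma inj_on_hweight: "q \<ge> 1 \<Longrightarrow> inj_on (\<lambda>(i, j). i * q + j * (q + 1)) {(i, j). j < (q::nat)}"
proof (rule inj_onI, clarify)
  fix i j i' j' :: nat assume q: "q \<ge> 1" and j: "j < q" "j' < q"
    and "i * q + j * (q + 1) = i' * q + j' * (q + 1)"
  then have e: "(i + j) * q + j = (i' + j') * q + j'" by (simp add: algebra_simps)
  have "j = j'" using arg_cong[OF e, of "\<lambda>t. t mod q"] j by simp
  moreover from this have "i = i'" using e q by simp
  ultimately show "i = i' \<and> j = j'" by simp
qed

text \<open>Riemann's inequality for L(m P_\<infinity>): the weights iq + j(q+1) with j < q miss exactly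
  the g numbers aq + b with a < b < q (the Weierstrass gaps).\<close>
lemma card_hexps_ge: assumes q: "q \<ge> 1" shows "m + 1 \<le> card (hexps q m) + genusH q"
proof -
  let ?w = "\<lambda>(i, j). i * q + j * (q + 1)"
  let ?S = "SIGMA b:{..<q}. {..<b}"
  let ?G = "(\<lambda>(b, a). a * q + b) ` ?S"
  have sub: "{..m} \<subseteq> ?w ` hexps q m \<union> ?G"
  proof
    fix w assume w: "w \<in> {..m}"
    define a b where "a = w div q" and "b = w mod q"
    have wab: "w = a * q + b" and bq: "b < q" using q by (simp_all add: a_def b_def)
    show "w \<in> ?w ` hexps q m \<union> ?G"
    proof (cases "b \<le> a")
      case True
      then have "w = (a - b) * q + b * (q + 1)" using wab by (simp add: algebra_simps diff_mult_distrib)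
      moreover have "(a - b, b) \<in> hexps q m" using w bq calculation by (simp add: hexps_def)
      ultimately show ?thesis by force
    next
      case False
      then have "(b, a) \<in> ?S" using bq by auto
      then show ?thesis using wab by force
    qed
  qed
  have "m + 1 = card {..m}" by simp
  also have "\<dots> \<le> card (?w ` hexps q m \<union> ?G)"
    by (rule card_mono[OF _ sub]) (simp add: finite_hexps[OF q])
  also have "\<dots> \<le> card (?w ` hexps q m) + card ?G" by (rule card_Un_le)
  also have "\<dots> \<le> card (hexps q m) + card ?S"
    by (intro add_mono card_image_le) (auto simp: finite_hexps[OF q])
  also have "card ?S = genusH q"
    by (simp add: card_SigmaI genusH_def Sum_Ico_nat lessThan_atLeast0)
  finally show ?thesis .
qed

lemma card_hexps_diff_le: "q \<ge> 1 \<Longrightarrow> card (hexps q a - hexps q b) \<le> a - b"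
proof -
  assume q: "q \<ge> 1"
  let ?w = "\<lambda>(i, j). i * q + j * (q + 1)"
  have "inj_on ?w (hexps q a - hexps q b)"
    by (rule inj_on_subset[OF inj_on_hweight[OF q]]) (auto simp: hexps_def)
  moreover have "?w ` (hexps q a - hexps q b) \<subseteq> {b<..a}" by (auto simp: hexps_def)
  ultimately have "card (hexps q a - hexps q b) \<le> card {b<..a}" by (intro card_inj_on_le) auto
  then show ?thesis by simp
qed

definition Pi_zero :: "'i set \<Rightarrow> ('i \<Rightarrow> 'b::zero set) \<Rightarrow> ('i \<Rightarrow> 'b) set" where
  "Pi_zero A B = {f. (\<forall>i. i \<notin> A \<longrightarrow> f i = 0) \<and> (\<forall>i\<in>A. f i \<in> B i)}"

lemma bij_betw_restrict_Pi_zero: "bij_betw (\<lambda>f. restrict f A) (Pi_zero A B) (PiE A B)"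
  by (rule bij_betw_byWitness[where f' = "\<lambda>g i. if i \<in> A then g i else 0"])
    (auto simp: Pi_zero_def fun_eq_iff PiE_def extensional_def)

lemma card_Pi_zero: "finite A \<Longrightarrow> card (Pi_zero A B) = (\<Prod>i\<in>A. card (B i))"
  using bij_betw_same_card[OF bij_betw_restrict_Pi_zero[of A B]] by (simp add: card_PiE)

lemma finite_Pi_zero: "finite A \<Longrightarrow> (\<And>i. i \<in> A \<Longrightarrow> finite (B i)) \<Longrightarrow> finite (Pi_zero A B)"
  using bij_betw_finite[OF bij_betw_restrict_Pi_zero[of A B]] by (simp add: finite_PiE)

lemma Pi_zero_diff:
  assumes "\<And>i x y. i \<in> A \<Longrightarrow> x \<in> B i \<Longrightarrow> y \<in> B i \<Longrightarrow> x - y \<in> B i"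
  shows "f \<in> Pi_zero A B \<Longrightarrow> g \<in> Pi_zero A B \<Longrightarrow> f - g \<in> Pi_zero A (B :: _ \<Rightarrow> 'b::ab_group_add set)"
  using assms by (simp add: Pi_zero_def)

lemma
  fixes d :: nat
  assumes "d \<ge> 1"
  shows card_poly_degree_less:
      "card {p :: 'a::{comm_ring_1,finite} poly. degree p < d} \<le> card (UNIV :: 'a set) ^ d"
    and finite_poly_degree_less: "finite {p :: 'a::{comm_ring_1,finite} poly. degree p < d}"
proof -
  let ?f = "\<lambda>c. (\<Sum>k\<le>d - 1. monom (c k) k) :: 'a poly"
  have sub: "{p :: 'a poly. degree p < d} \<subseteq> ?f ` PiE {..d - 1} (\<lambda>_. UNIV)"
  proof
    fix p :: "'a poly" assume "p \<in> {p. degree p < d}"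
    then have "p = (\<Sum>k\<le>d - 1. monom (coeff p k) k)" by (intro poly_as_sum_of_monoms'[symmetric]) simp
    also have "\<dots> = ?f (restrict (coeff p) {..d - 1})" by (rule sum.cong) auto
    finally show "p \<in> ?f ` PiE {..d - 1} (\<lambda>_. UNIV)"
      by (rule image_eqI[where x = "restrict (coeff p) {..d - 1}"]) simp
  qed
  have fin: "finite (PiE {..d - 1} (\<lambda>_. UNIV :: 'a set))" by (simp add: finite_PiE)
  show "finite {p :: 'a poly. degree p < d}" by (rule finite_subset[OF sub finite_imageI[OF fin]])
  have "card {p :: 'a poly. degree p < d} \<le> card (?f ` PiE {..d - 1} (\<lambda>_. UNIV))"
    by (rule card_mono[OF finite_imageI[OF fin] sub])
  also have "\<dots> \<le> card (PiE {..d - 1} (\<lambda>_. UNIV :: 'a set))" by (rule card_image_le[OF fin])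
  also have "\<dots> = card (UNIV :: 'a set) ^ d" using assms by (simp add: card_PiE)
  finally show "card {p :: 'a poly. degree p < d} \<le> card (UNIV :: 'a set) ^ d" .
qed

lemma card_le_card_image_mult_card_diffs:
  fixes \<Phi> :: "'a::ab_group_add \<Rightarrow> 'b"
  assumes U: "finite U" and C: "finite C" "\<Phi> ` U \<subseteq> C" and Z: "finite Z"
    and diff: "\<And>u v. u \<in> U \<Longrightarrow> v \<in> U \<Longrightarrow> \<Phi> u = \<Phi> v \<Longrightarrow> u - v \<in> Z"
  shows "card U \<le> card C * card Z"
proof -
  let ?F = "\<lambda>c. {u \<in> U. \<Phi> u = c}"
  have "U = (\<Union>c\<in>\<Phi> ` U. ?F c)" by auto
  then have "card U \<le> (\<Sum>c\<in>\<Phi> ` U. card (?F c))"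
    using card_UN_le[of "\<Phi> ` U" ?F] U by simp
  also have "\<dots> \<le> (\<Sum>c\<in>\<Phi> ` U. card Z)"
  proof (rule sum_mono)
    fix c assume "c \<in> \<Phi> ` U"
    then obtain v where v: "v \<in> U" "\<Phi> v = c" by blast
    have "inj_on (\<lambda>u. u - v) (?F c)" by (rule inj_onI) simp
    moreover have "(\<lambda>u. u - v) ` ?F c \<subseteq> Z" using diff v by auto
    ultimately show "card (?F c) \<le> card Z" using Z by (rule card_inj_on_le)
  qed
  also have "\<dots> \<le> card C * card Z" using C by (simp add: card_mono)
  finally show ?thesis .
qed

section \<open>The linear system of Problem 1\<close>

lemma combo_add: "combo q h s Rv (a + b) j = combo q h s Rv a j + combo q h s Rv b j"
  unfolding combo_def by (simp add: sum.distrib distrib_right)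

lemma combo_diff: "combo q h s Rv (a - b) j = combo q h s Rv a j - combo q h s Rv b j"
  unfolding combo_def by (simp add: sum_subtractf left_diff_distrib)

lemma preceq_sum_list_diff:
  assumes "preceq i j"
  shows "(\<Sum>\<mu><length j. j ! \<mu> - i ! \<mu>) + sum_list i = sum_list j"
proof -
  have li: "length i = length j" and le: "\<And>\<mu>. \<mu> < length j \<Longrightarrow> i ! \<mu> \<le> j ! \<mu>"
    using assms by (auto simp: preceq_def)
  have "(\<Sum>\<mu><length j. j ! \<mu> - i ! \<mu>) + sum_list i = (\<Sum>\<mu><length j. (j ! \<mu> - i ! \<mu>) + i ! \<mu>)"
    by (simp add: sum.distrib sum_list_sum_nth li atLeast0LessThan)
  also have "\<dots> = sum_list j" using le by (simp add: sum_list_sum_nth atLeast0LessThan)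
  finally show ?thesis .
qed

text \<open>Each A_(i,j) has weight at most |j - i| (n + e) + |i| n when the R_\<mu> have weight n + e, so a
  combination with weight(\<lambda>_i) \<le> t + |i| e has weight at most t + |j| (n + e).\<close>
lemma hweight_le_combo:
  assumes q: "q \<ge> 1" and lj: "length j = h"
    and R: "\<forall>\<mu> < h. hweight_le q (q ^ 3 + e) (Rv \<mu>)"
    and lam: "\<forall>i \<in> Iset h s. hweight_le q (t + sum_list i * e) (lam i)"
  shows "hweight_le q (t + sum_list j * (q ^ 3 + e)) (combo q h s Rv lam j)"
  unfolding combo_def
proof (rule hweight_le_sum)
  fix i assume i: "i \<in> Iset h s"
  show "hweight_le q (t + sum_list j * (q ^ 3 + e)) (lam i * Aent q Rv i j)"
  proof (cases "preceq i j")
    case True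
    let ?S = "\<Sum>\<mu><length j. j ! \<mu> - i ! \<mu>"
    have "hweight_le q (?S * (q ^ 3 + e)) (Rpowv Rv i j)"
      unfolding Rpowv_def sum_distrib_right using R lj by (intro hweight_le_prod hweight_le_power) auto
    then have w: "hweight_le q ((t + sum_list i * e) + ((0 + ?S * (q ^ 3 + e)) + sum_list i * q ^ 3))
        (lam i * (of_nat (binomv i j) * Rpowv Rv i j * Gpol q ^ sum_list i))"
      using lam i by (intro hweight_le_mult hweight_le_of_nat hweight_le_power hweight_le_Gpol q) auto
    have "(t + sum_list i * e) + ((0 + ?S * (q ^ 3 + e)) + sum_list i * q ^ 3)
        = t + sum_list j * (q ^ 3 + e)"
      using preceq_sum_list_diff[OF True, symmetric] by (simp add: algebra_simps)
    with w True show ?thesis by (simp only: Aent_def if_True)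
  qed (simp add: Aent_def)
qed

lemma finite_lists_sum_list_le: "finite {j :: nat list. length j = h \<and> sum_list j \<le> l}"
proof (rule finite_subset)
  show "{j :: nat list. length j = h \<and> sum_list j \<le> l} \<subseteq> {xs. set xs \<subseteq> {..l} \<and> length xs = h}"
    using member_le_sum_list by fastforce
qed (rule finite_lists_length_eq, simp)

lemma finite_Iset: "finite (Iset h s)"
  by (rule finite_subset[OF _ finite_lists_sum_list_le[of h s]]) (auto simp: Iset_def)

lemma finite_Jset: "finite (Jset h l)"
  by (rule finite_subset[OF _ finite_lists_sum_list_le[of h l]]) (auto simp: Jset_def)

locale hermitian_problem =
  fixes q h s l \<tau> :: nat and mH :: int and Rv :: "nat \<Rightarrow> 'a::{field,finite} poly poly"
  assumes q_ge_2: "q \<ge> 2" and card_UNIV: "card (UNIV :: 'a set) = q ^ 2"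
    and mH_lo: "2 * (int (genusH q) - 1) < mH" and mH_hi: "mH < int (q ^ 3)"
    and R_in: "\<forall>\<mu> < h. inR q (Rv \<mu>)"
    and R_deg: "\<forall>\<mu> < h. Rv \<mu> \<noteq> 0 \<longrightarrow> degH q (Rv \<mu>) < q ^ 3 + 2 * genusH q"
    and \<tau>_pos: "\<tau> \<ge> 1" and s_pos: "s \<ge> 1" and s_le_l: "s \<le> l"
begin

definition "i0 = replicate h (0 :: nat)"
definition "Jlow = {j \<in> Jset h l. sum_list j < s}"
definition "Jhigh = {j \<in> Jset h l. s \<le> sum_list j}"
definition "lam_slope = 2 * genusH q - 1"
definition "lam_bound i = \<tau> + sum_list i * lam_slope"
definition "psi_bound j = \<tau> + sum_list j * nat mH"
definition "combo_bound j = \<tau> + sum_list j * (q ^ 3 + lam_slope)"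
definition "Sols = solutions_of_degree q h s l mH Rv \<tau>"

lemma q_pos: "q \<ge> 1"
  using q_ge_2 by simp

lemma genusH_pos: "genusH q \<ge> 1"
proof -
  have "2 * 1 \<le> q * (q - 1)" using q_ge_2 by (intro mult_le_mono) auto
  then show ?thesis by (simp add: genusH_def)
qed

lemma int_lam_slope: "int lam_slope = 2 * int (genusH q) - 1"
  using genusH_pos by (simp add: lam_slope_def)

lemma mH_nonneg: "mH \<ge> 0"
  using mH_lo genusH_pos by simp

lemma hweight_le_R: "\<forall>\<mu> < h. hweight_le q (q ^ 3 + lam_slope) (Rv \<mu>)"
proof (intro allI impI)
  fix \<mu> assume \<mu>: "\<mu> < h"
  then have "Rv \<mu> \<in> Lspace q (q ^ 3 + lam_slope)"
    using R_in R_deg genusH_pos by (auto simp: Lspace_iff_inR_degH lam_slope_def)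
  then show "hweight_le q (q ^ 3 + lam_slope) (Rv \<mu>)" by (simp add: Lspace_def)
qed

lemma i0_in_Iset: "i0 \<in> Iset h s"
  using s_pos by (simp add: i0_def Iset_def sum_list_replicate)

lemma Iset_eq: "Iset h s = insert i0 Jlow" and i0_notin_Jlow: "i0 \<notin> Jlow"
proof -
  have zero: "i = i0" if "length i = h" "sum_list i = 0" for i :: "nat list"
    using that by (metis i0_def replicate_length_same sum_list_eq_0_iff)
  show "Iset h s = insert i0 Jlow"
  proof (intro set_eqI iffI)
    fix i assume i: "i \<in> Iset h s"
    show "i \<in> insert i0 Jlow"
    proof (cases "sum_list i = 0")
      case False
      then have "1 \<le> sum_list i" by linarith
      with i s_le_l show ?thesis by (simp add: Iset_def Jlow_def Jset_def)
    qed (use i zero in \<open>simp add: Iset_def\<close>)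
  qed (use i0_in_Iset in \<open>auto simp: Iset_def Jlow_def Jset_def\<close>)
  show "i0 \<notin> Jlow" by (simp add: Jlow_def Jset_def i0_def sum_list_replicate)
qed

lemma Jset_eq: "Jset h l = Jlow \<union> Jhigh" and Jlow_Jhigh_disjoint: "Jlow \<inter> Jhigh = {}"
  by (auto simp: Jlow_def Jhigh_def)

lemma finite_Jlow: "finite Jlow" and finite_Jhigh: "finite Jhigh"
  using finite_Jset by (simp_all add: Jlow_def Jhigh_def)

definition "Lams = Pi_zero (Iset h s) (\<lambda>i. Lspace q (lam_bound i) :: 'a poly poly set)"
definition "Psis = Pi_zero (Jset h l) (\<lambda>j. Lspace q (psi_bound j) :: 'a poly poly set)"

definition key_eqs :: "(nat list \<Rightarrow> 'a poly poly) \<Rightarrow> (nat list \<Rightarrow> 'a poly poly) \<Rightarrow> bool" where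
  "key_eqs L P \<longleftrightarrow> (\<forall>j\<in>Jlow. eqR q (P j) (combo q h s Rv L j)) \<and>
     (\<forall>j\<in>Jhigh. \<exists>w. eqR q (P j) (combo q h s Rv L j + w * Gpol q ^ s))"

lemma key_eqs_add:
  assumes "key_eqs L P" "key_eqs L' P'"
  shows "key_eqs (L + L') (P + P')"
  unfolding key_eqs_def
proof (intro conjI ballI)
  fix j assume "j \<in> Jlow"
  then have "eqR q (P j) (combo q h s Rv L j)" "eqR q (P' j) (combo q h s Rv L' j)"
    using assms by (auto simp: key_eqs_def)
  then show "eqR q ((P + P') j) (combo q h s Rv (L + L') j)"
    unfolding eqR_def combo_add using dvd_add by (fastforce simp: algebra_simps)
next
  fix j assume "j \<in> Jhigh"
  then obtain w w' where "eqR q (P j) (combo q h s Rv L j + w * Gpol q ^ s)"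
      "eqR q (P' j) (combo q h s Rv L' j + w' * Gpol q ^ s)"
    using assms unfolding key_eqs_def by blast
  then have "eqR q ((P + P') j) (combo q h s Rv (L + L') j + (w + w') * Gpol q ^ s)"
    unfolding eqR_def combo_add using dvd_add by (fastforce simp: algebra_simps)
  then show "\<exists>w. eqR q ((P + P') j) (combo q h s Rv (L + L') j + w * Gpol q ^ s)" by blast
qed

lemma mem_Sols_iff:
  "(L, P) \<in> Sols \<longleftrightarrow> L \<in> Lams \<and> P \<in> Psis \<and> monicH q (L i0) \<and> degH q (L i0) = \<tau> \<and> key_eqs L P"
proof -
  have lam: "(inR q f \<and> (f \<noteq> 0 \<longrightarrow> int (degH q f) - int (sum_list i) * (2 * int (genusH q) - 1) \<le> int \<tau>))
      \<longleftrightarrow> f \<in> Lspace q (lam_bound i)" for f :: "'a poly poly" and i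
  proof -
    have "int (lam_bound i) = int \<tau> + int (sum_list i) * (2 * int (genusH q) - 1)"
      by (simp add: lam_bound_def int_lam_slope)
    then show ?thesis unfolding Lspace_iff_inR_degH by linarith
  qed
  have psi: "(inR q f \<and> (f \<noteq> 0 \<longrightarrow> int (degH q f) - int (sum_list j) * mH \<le> int \<tau>))
      \<longleftrightarrow> f \<in> Lspace q (psi_bound j)" for f :: "'a poly poly" and j
  proof -
    have "int (psi_bound j) = int \<tau> + int (sum_list j) * mH"
      by (simp add: psi_bound_def mH_nonneg)
    then show ?thesis unfolding Lspace_iff_inR_degH by linarith
  qed
  show ?thesis
  proof (cases "degH q (L i0) = \<tau>")
    case True
    have "(L, P) \<in> Sols \<longleftrightarrow> is_solution q h s l mH Rv L P"
      using True by (simp add: Sols_def solutions_of_degree_def i0_def)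
    also have "\<dots> \<longleftrightarrow> L \<in> Lams \<and> P \<in> Psis \<and> monicH q (L i0) \<and> key_eqs L P"
      unfolding is_solution_def Lams_def Psis_def Pi_zero_def key_eqs_def Jlow_def Jhigh_def
        i0_def[symmetric] True
      by (auto simp: lam[symmetric] psi[symmetric])
    finally show ?thesis using True by simp
  qed (simp add: Sols_def solutions_of_degree_def i0_def)
qed

definition "pert_bound i = lam_bound i - (if i = i0 then 1 else 0)"

lemma pert_bound_le: "pert_bound i \<le> lam_bound i"
  by (simp add: pert_bound_def)

lemma pert_bound_i0: "pert_bound i0 = \<tau> - 1"
  by (simp add: pert_bound_def lam_bound_def i0_def sum_list_replicate)

text \<open>Solutions of the homogeneous problem whose \<lambda>_0 has degree below \<tau>.\<close>
definition hom_sol :: "(nat list \<Rightarrow> 'a poly poly) \<Rightarrow> (nat list \<Rightarrow> 'a poly poly) \<Rightarrow> bool" where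
  "hom_sol la ps \<longleftrightarrow> la \<in> Pi_zero (Iset h s) (\<lambda>i. Lspace q (pert_bound i)) \<and> ps \<in> Psis \<and> key_eqs la ps"

lemma Sols_add_hom_sol:
  assumes S: "(L, P) \<in> Sols" and H: "hom_sol la ps"
  shows "(L + la, P + ps) \<in> Sols"
proof -
  have S': "L \<in> Lams" "P \<in> Psis" "monicH q (L i0)" "degH q (L i0) = \<tau>" "key_eqs L P"
    using S by (simp_all add: mem_Sols_iff)
  have H': "la \<in> Pi_zero (Iset h s) (\<lambda>i. Lspace q (pert_bound i))" "ps \<in> Psis" "key_eqs la ps"
    using H by (simp_all add: hom_sol_def)
  have "L i0 \<in> Lspace q (lam_bound i0)" using S'(1) i0_in_Iset by (simp add: Lams_def Pi_zero_def)
  moreover have "la i0 \<in> Lspace q (\<tau> - 1)"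
    using H'(1) i0_in_Iset pert_bound_i0 by (auto simp: Pi_zero_def)
  ultimately have "monicH q (L i0 + la i0)" "degH q (L i0 + la i0) = \<tau>"
    using monicH_add_lower[of "L i0" q \<tau> "la i0"] S'(3,4) \<tau>_pos by (auto simp: Lspace_def)
  moreover have "L + la \<in> Lams"
    using S'(1) H'(1)
    by (fastforce simp: Lams_def Pi_zero_def intro!: Lspace_add intro: Lspace_mono[OF _ pert_bound_le])
  moreover have "P + ps \<in> Psis" using S'(2) H'(2) by (auto simp: Psis_def Pi_zero_def intro: Lspace_add)
  ultimately show ?thesis using key_eqs_add[OF S'(5) H'(3)] by (simp add: mem_Sols_iff)
qed

lemma finite_Sols: "finite Sols"
proof (rule finite_subset)
  show "Sols \<subseteq> Lams \<times> Psis" using mem_Sols_iff by auto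
  show "finite (Lams \<times> Psis)" unfolding Lams_def Psis_def
    by (intro finite_cartesian_product finite_Pi_zero finite_Iset finite_Jset)
      (simp_all add: finite_Lspace[OF q_pos])
qed

definition "Pert = Pi_zero (Iset h s) (\<lambda>i. Lspace q (pert_bound i) :: 'a poly poly set)
    \<times> Pi_zero Jhigh (\<lambda>j. Lspace q (psi_bound j) :: 'a poly poly set)"

text \<open>Monomials that a reduced combination \<Sum> \<lambda>_i A_(i,j) with |j| < s may contain but \<psi>_j may not.\<close>
definition "Gap = (SIGMA j:Jlow. hexps q (combo_bound j) - hexps q (psi_bound j))"

definition "Gs = (monom 1 (q ^ 2) - monom 1 1 :: 'a poly) ^ s"

definition "Adm = {u \<in> Pert.
    (\<forall>(j, a, b) \<in> Gap. coeff (coeff (hred q (combo q h s Rv (fst u) j)) b) a = 0) \<and>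
    (\<forall>j \<in> Jhigh. \<forall>b < q. Gs dvd coeff (hred q (snd u j - combo q h s Rv (fst u) j)) b)}"

definition "constraints u =
   (restrict (\<lambda>(j, a, b). coeff (coeff (hred q (combo q h s Rv (fst u) j)) b) a) Gap,
    restrict (\<lambda>(j, b). coeff (hred q (snd u j - combo q h s Rv (fst u) j)) b mod Gs) (Jhigh \<times> {..<q}))"

definition "Cod = PiE Gap (\<lambda>_. UNIV :: 'a set) \<times> PiE (Jhigh \<times> {..<q}) (\<lambda>_. {p :: 'a poly. degree p < s * q ^ 2})"

definition "completed_psi u j = (if j \<in> Jlow then hred q (combo q h s Rv (fst u) j) else snd u j)"

lemma Gpol_power: "Gpol q ^ s = [:Gs:]"
  unfolding Gpol_def Gs_def by (simp add: poly_const_pow)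

lemma degree_Gs: "degree Gs = s * q ^ 2" and Gs_neq_0: "Gs \<noteq> 0"
proof -
  have four: "4 \<le> q ^ 2" using power_mono[OF q_ge_2, of 2] by simp
  then have q2: "q ^ 2 \<noteq> 1" "q ^ 2 \<noteq> 0" using q_ge_2 by simp_all
  from four have "degree (monom 1 (q ^ 2) - monom 1 1 :: 'a poly) = q ^ 2"
    by (intro antisym degree_le le_degree) (auto simp: coeff_monom)
  moreover from this q2 have "monom 1 (q ^ 2) - monom 1 1 \<noteq> (0 :: 'a poly)" by auto
  ultimately show "degree Gs = s * q ^ 2" "Gs \<noteq> 0" by (simp_all add: Gs_def degree_power_eq)
qed

lemma finite_Pert: "finite Pert"
  unfolding Pert_def using finite_Iset finite_Jset
  by (intro finite_cartesian_product finite_Pi_zero) (simp_all add: Jhigh_def finite_Lspace[OF q_pos])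

lemma finite_Gap: "finite Gap"
  unfolding Gap_def using finite_Jset finite_hexps[OF q_pos] by (auto simp: Jlow_def)

lemma finite_Cod: "finite Cod"
  unfolding Cod_def using finite_Gap finite_Jset finite_poly_degree_less[of "s * q ^ 2"] s_pos q_pos
  by (intro finite_cartesian_product finite_PiE) (auto simp: Jhigh_def)

lemma finite_Adm: "finite Adm"
  using finite_Pert by (rule rev_finite_subset) (auto simp: Adm_def)

lemma constraints_in_Cod: "constraints ` Pert \<subseteq> Cod"
proof -
  have "p mod Gs \<in> {p. degree p < s * q ^ 2}" for p
    using degree_mod_less[OF Gs_neq_0, of p] degree_Gs s_pos q_pos by (cases "p mod Gs = 0") auto
  then show ?thesis unfolding constraints_def Cod_def
    by (intro image_subsetI SigmaI restrict_PiE_iff[THEN iffD2] ballI) (auto simp del: mem_Collect_eq)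
qed

lemma constraints_eq_imp_diff_in_Adm:
  assumes u: "u \<in> Pert" and v: "v \<in> Pert" and eq: "constraints u = constraints v"
  shows "u - v \<in> Adm"
proof -
  have "u - v \<in> Pert"
    using u v by (auto simp: Pert_def intro!: Pi_zero_diff Lspace_diff)
  moreover have "coeff (coeff (hred q (combo q h s Rv (fst (u - v)) j)) b) a = 0" if "(j, a, b) \<in> Gap" for j a b
    using fun_cong[OF arg_cong[OF eq, of fst], of "(j, a, b)"] that
    by (simp add: constraints_def combo_diff hred_diff[OF q_ge_2])
  moreover have "Gs dvd coeff (hred q (snd (u - v) j - combo q h s Rv (fst (u - v)) j)) b"
    if "j \<in> Jhigh" "b < q" for j b
  proof -
    have "hred q (snd (u - v) j - combo q h s Rv (fst (u - v)) j)
        = hred q (snd u j - combo q h s Rv (fst u) j) - hred q (snd v j - combo q h s Rv (fst v) j)"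
      unfolding hred_diff[OF q_ge_2, symmetric] by (simp add: combo_diff algebra_simps)
    moreover have "coeff (hred q (snd u j - combo q h s Rv (fst u) j)) b mod Gs
        = coeff (hred q (snd v j - combo q h s Rv (fst v) j)) b mod Gs"
      using fun_cong[OF arg_cong[OF eq, of snd], of "(j, b)"] that by (simp add: constraints_def)
    ultimately show ?thesis by (simp only: coeff_diff mod_eq_dvd_iff)
  qed
  ultimately show ?thesis by (auto simp: Adm_def)
qed

lemma hred_combo_in_Lspace:
  assumes u: "u \<in> Adm" and j: "j \<in> Jlow"
  shows "hred q (combo q h s Rv (fst u) j) \<in> Lspace q (psi_bound j)"
proof -
  let ?r = "hred q (combo q h s Rv (fst u) j)"
  have "\<forall>i \<in> Iset h s. hweight_le q (pert_bound i) (fst u i)"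
    using u by (auto simp: Adm_def Pert_def Pi_zero_def Lspace_def)
  then have "\<forall>i \<in> Iset h s. hweight_le q (\<tau> + sum_list i * lam_slope) (fst u i)"
    using pert_bound_le hweight_le_mono unfolding lam_bound_def by blast
  then have "hweight_le q (combo_bound j) (combo q h s Rv (fst u) j)"
    unfolding combo_bound_def using j hweight_le_R
    by (intro hweight_le_combo q_pos) (auto simp: Jlow_def Jset_def)
  then have r: "degree ?r < q" "hweight_le q (combo_bound j) ?r"
    by (simp_all add: degree_hred[OF q_ge_2] hred_hweight_le[OF q_ge_2])
  have "a * q + b * (q + 1) \<le> psi_bound j" if nz: "coeff (coeff ?r b) a \<noteq> 0" for a b
  proof (rule ccontr)
    have "coeff ?r b \<noteq> 0" using nz by auto
    then have "b < q" using order.strict_trans1[OF le_degree r(1)] by blast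
    moreover have "a * q + b * (q + 1) \<le> combo_bound j" using nz r(2) by (simp add: hweight_le_def)
    moreover assume "\<not> a * q + b * (q + 1) \<le> psi_bound j"
    ultimately have "(j, a, b) \<in> Gap" using j by (simp add: Gap_def hexps_def)
    with u nz show False by (auto simp: Adm_def)
  qed
  with r(1) show ?thesis by (simp add: Lspace_def hweight_le_def)
qed

text \<open>Divisibility of every Y-coefficient by G^s means divisibility by G^s in R.\<close>
lemma high_key_eq:
  assumes u: "u \<in> Adm" and j: "j \<in> Jhigh"
  shows "\<exists>w. eqR q (snd u j) (combo q h s Rv (fst u) j + w * Gpol q ^ s)"
proof -
  let ?d = "snd u j - combo q h s Rv (fst u) j"
  let ?r = "hred q ?d"
  have "Gs dvd coeff ?r b" for b
  proof (cases "b < q")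
    case False
    then have "coeff ?r b = 0" using degree_hred[OF q_ge_2, of ?d] by (simp add: coeff_eq_0)
    then show ?thesis by simp
  qed (use u j in \<open>auto simp: Adm_def\<close>)
  then obtain w where r: "?r = w * Gpol q ^ s"
    unfolding Gpol_power using const_poly_dvd_iff by (metis dvdE mult.commute)
  have "hcurve q dvd (?d - ?r)" by (rule hcurve_dvd_hred[OF q_ge_2])
  then have "eqR q (snd u j) (combo q h s Rv (fst u) j + w * Gpol q ^ s)"
    by (simp add: eqR_def r algebra_simps)
  then show ?thesis by blast
qed

lemma hom_sol_completed_psi: "u \<in> Adm \<Longrightarrow> hom_sol (fst u) (completed_psi u)"
proof -
  assume u: "u \<in> Adm"
  then have "fst u \<in> Pi_zero (Iset h s) (\<lambda>i. Lspace q (pert_bound i))"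
    and snd_u: "snd u \<in> Pi_zero Jhigh (\<lambda>j. Lspace q (psi_bound j))"
    by (auto simp: Adm_def Pert_def)
  moreover have "completed_psi u \<in> Psis"
    using snd_u hred_combo_in_Lspace[OF u] Jset_eq Jlow_Jhigh_disjoint
    by (auto simp: Psis_def Pi_zero_def completed_psi_def)
  moreover have "key_eqs (fst u) (completed_psi u)"
  proof -
    have "eqR q (hred q c) c" for c :: "'a poly poly"
      using hcurve_dvd_hred[OF q_ge_2, of c] dvd_minus_iff[of "hcurve q" "c - hred q c"]
      by (simp add: eqR_def)
    then show ?thesis using high_key_eq[OF u] Jlow_Jhigh_disjoint
      by (auto simp: key_eqs_def completed_psi_def)
  qed
  ultimately show ?thesis by (simp add: hom_sol_def)
qed

lemma inj_on_completion: "inj_on (\<lambda>u. (fst u, completed_psi u)) Pert"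
proof (rule inj_onI)
  fix u v assume u: "u \<in> Pert" and v: "v \<in> Pert"
    and eq: "(fst u, completed_psi u) = (fst v, completed_psi v)"
  have "snd u j = snd v j" for j
  proof (cases "j \<in> Jhigh")
    case True
    then have "j \<notin> Jlow" using Jlow_Jhigh_disjoint by blast
    moreover have "completed_psi u j = completed_psi v j" using eq by simp
    ultimately show ?thesis by (simp add: completed_psi_def)
  qed (use u v in \<open>auto simp: Pert_def Pi_zero_def\<close>)
  with eq show "u = v" by (simp add: prod_eq_iff fun_eq_iff)
qed

lemma card_Adm_le_card_Sols:
  assumes "Sols \<noteq> {}"
  shows "card Adm \<le> card Sols"
proof -
  obtain L P where S: "(L, P) \<in> Sols" using assms by auto
  let ?f = "\<lambda>u. (L + fst u, P + completed_psi u)"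
  have "inj_on ?f Adm"
    using inj_on_subset[OF inj_on_completion, of Adm] by (auto simp: Adm_def inj_on_def)
  moreover have "?f ` Adm \<subseteq> Sols" using Sols_add_hom_sol[OF S hom_sol_completed_psi] by auto
  ultimately show ?thesis using finite_Sols by (rule card_inj_on_le)
qed

lemma card_Pert_le: "card Pert \<le> card Cod * card Adm"
  using finite_Pert finite_Cod constraints_in_Cod finite_Adm constraints_eq_imp_diff_in_Adm
  by (rule card_le_card_image_mult_card_diffs)

definition "dim_Pert = (\<Sum>i\<in>Iset h s. card (hexps q (pert_bound i))) + (\<Sum>j\<in>Jhigh. card (hexps q (psi_bound j)))"
definition "dim_Cod = card Gap + s * q ^ 2 * (card Jhigh * q)"

lemma card_Pert: "card Pert = (q ^ 2) ^ dim_Pert"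
proof -
  have "card Pert = (\<Prod>i\<in>Iset h s. card (Lspace q (pert_bound i) :: 'a poly poly set))
      * (\<Prod>j\<in>Jhigh. card (Lspace q (psi_bound j) :: 'a poly poly set))"
    using finite_Iset finite_Jset by (simp add: Pert_def card_cartesian_product card_Pi_zero Jhigh_def)
  then show ?thesis
    by (simp add: card_Lspace[OF q_pos] card_UNIV dim_Pert_def power_sum power_add)
qed

lemma card_Cod_le: "card Cod \<le> (q ^ 2) ^ dim_Cod"
proof -
  have fin: "finite (Jhigh \<times> {..<q})" using finite_Jhigh by simp
  have "card Cod = (q ^ 2) ^ card Gap * card {p :: 'a poly. degree p < s * q ^ 2} ^ (card Jhigh * q)"
    using finite_Gap fin by (simp add: Cod_def card_cartesian_product card_PiE card_UNIV)
  also have "\<dots> \<le> (q ^ 2) ^ card Gap * ((q ^ 2) ^ (s * q ^ 2)) ^ (card Jhigh * q)"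
    using card_poly_degree_less[of "s * q ^ 2", where 'a = 'a] s_pos q_pos card_UNIV
    by (intro mult_left_mono power_mono) auto
  also have "\<dots> = (q ^ 2) ^ dim_Cod" unfolding dim_Cod_def power_add power_mult ..
  finally show ?thesis .
qed

lemma card_Gap_le: "card Gap \<le> (\<Sum>j\<in>Jlow. sum_list j * (q ^ 3 + lam_slope - nat mH))"
proof -
  have "card Gap = (\<Sum>j\<in>Jlow. card (hexps q (combo_bound j) - hexps q (psi_bound j)))"
    unfolding Gap_def using finite_Jset finite_hexps[OF q_pos] by (simp add: Jlow_def card_SigmaI)
  also have "\<dots> \<le> (\<Sum>j\<in>Jlow. combo_bound j - psi_bound j)"
    by (intro sum_mono card_hexps_diff_le[OF q_pos])
  also have "\<dots> = (\<Sum>j\<in>Jlow. sum_list j * (q ^ 3 + lam_slope - nat mH))"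
    by (simp add: combo_bound_def psi_bound_def diff_mult_distrib2)
  finally show ?thesis .
qed

lemma Clt_eq: "Clt h s = card (Iset h s)"
  by (simp add: Clt_def Iset_def)

lemma Wlt_eq: "Wlt h s = (\<Sum>j\<in>Jlow. sum_list j)"
proof -
  have "Wlt h s = (\<Sum>i\<in>Iset h s. sum_list i)" by (simp add: Wlt_def Iset_def)
  also have "\<dots> = (\<Sum>j\<in>Jlow. sum_list j)"
    using i0_notin_Jlow finite_Jlow by (simp add: Iset_eq i0_def sum_list_replicate)
  finally show ?thesis .
qed

lemma lists_sum_list_le_eq: "{j :: nat list. length j = h \<and> sum_list j \<le> l} = Iset h s \<union> Jhigh"
  and Iset_Jhigh_disjoint: "Iset h s \<inter> Jhigh = {}"
  using s_le_l s_pos by (auto simp: Iset_def Jhigh_def Jset_def)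

lemma Cle_eq: "Cle h l = card (Iset h s) + card Jhigh"
  unfolding Cle_def lists_sum_list_le_eq using Iset_Jhigh_disjoint finite_Iset finite_Jset
  by (simp add: card_Un_disjoint Jhigh_def)

lemma Wle_eq: "Wle h l = Wlt h s + (\<Sum>j\<in>Jhigh. sum_list j)"
  unfolding Wle_def lists_sum_list_le_eq using Iset_Jhigh_disjoint finite_Iset finite_Jset
  by (simp add: sum.union_disjoint Jhigh_def Wlt_def Iset_def)

text \<open>By Riemann's inequality every L(m P_\<infinity>) has at least m + 1 - g basis monomials; the
  subtraction of 1 accounts for \<lambda>_0.\<close>
lemma dim_Pert_ge:
  "int dim_Pert \<ge> (int \<tau> + 1 - int (genusH q)) * int (card (Iset h s)) + int lam_slope * int (Wlt h s) - 1
     + (int \<tau> + 1 - int (genusH q)) * int (card Jhigh) + mH * (\<Sum>j\<in>Jhigh. int (sum_list j))"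
proof -
  have RR: "int (card (hexps q m)) \<ge> int m + 1 - int (genusH q)" for m
    using card_hexps_ge[OF q_pos, of m] by linarith
  have "int (pert_bound i) = int (lam_bound i) - (if i = i0 then 1 else 0)" for i
    using \<tau>_pos by (simp add: pert_bound_def lam_bound_def i0_def sum_list_replicate)
  then have "(\<Sum>i\<in>Iset h s. int (pert_bound i)) = (\<Sum>i\<in>Iset h s. int (lam_bound i)) - 1"
    using finite_Iset i0_in_Iset by (simp only: sum_subtractf) simp
  moreover have "(\<Sum>i\<in>Iset h s. int (lam_bound i)) = int \<tau> * int (card (Iset h s)) + int lam_slope * int (Wlt h s)"
    by (simp add: lam_bound_def sum.distrib Wlt_def Iset_def[symmetric] of_nat_sum sum_distrib_left
        mult.commute)
  ultimately have "(int \<tau> + 1 - int (genusH q)) * int (card (Iset h s)) + int lam_slope * int (Wlt h s) - 1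
      = (\<Sum>i\<in>Iset h s. int (pert_bound i) + 1 - int (genusH q))"
    by (simp add: sum.distrib sum_subtractf algebra_simps)
  also have "\<dots> \<le> (\<Sum>i\<in>Iset h s. int (card (hexps q (pert_bound i))))"
    by (intro sum_mono RR)
  finally have I: "(int \<tau> + 1 - int (genusH q)) * int (card (Iset h s)) + int lam_slope * int (Wlt h s) - 1
      \<le> (\<Sum>i\<in>Iset h s. int (card (hexps q (pert_bound i))))" .
  have "(int \<tau> + 1 - int (genusH q)) * int (card Jhigh) + mH * (\<Sum>j\<in>Jhigh. int (sum_list j))
      = (\<Sum>j\<in>Jhigh. int (psi_bound j) + 1 - int (genusH q))"
    using mH_nonneg
    by (simp add: psi_bound_def sum.distrib sum_subtractf) (simp add: sum_distrib_left algebra_simps)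
  also have "\<dots> \<le> (\<Sum>j\<in>Jhigh. int (card (hexps q (psi_bound j))))"
    by (intro sum_mono RR)
  finally show ?thesis using I by (simp add: dim_Pert_def of_nat_sum)
qed

lemma dim_Cod_le:
  "int dim_Cod \<le> (int (q ^ 3) + int lam_slope - mH) * int (Wlt h s) + int (q ^ 3) * int s * int (card Jhigh)"
proof -
  have "nat mH < q ^ 3" using mH_hi mH_nonneg by (simp add: nat_less_iff)
  then have eq: "int (q ^ 3 + lam_slope - nat mH) = int (q ^ 3) + int lam_slope - mH"
    using mH_nonneg by (simp add: of_nat_diff)
  have "int (card Gap) \<le> int (\<Sum>j\<in>Jlow. sum_list j * (q ^ 3 + lam_slope - nat mH))"
    using card_Gap_le by (simp only: of_nat_le_iff)
  also have "\<dots> = (\<Sum>j\<in>Jlow. int (sum_list j) * (int (q ^ 3) + int lam_slope - mH))"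
    unfolding of_nat_sum of_nat_mult eq ..
  also have "\<dots> = (int (q ^ 3) + int lam_slope - mH) * int (Wlt h s)"
    by (simp add: Wlt_eq of_nat_sum sum_distrib_right mult.commute)
  finally show ?thesis by (simp add: dim_Cod_def power2_eq_square power3_eq_cube algebra_simps)
qed

lemma deltaH_le: "deltaH q h s l mH \<tau> - 1 \<le> int dim_Pert - int dim_Cod"
proof -
  have "deltaH q h s l mH \<tau> = (int \<tau> + 1 - int (genusH q)) * (int (card (Iset h s)) + int (card Jhigh))
      - int (q ^ 3) * int (Wlt h s) - int (q ^ 3) * int s * int (card Jhigh)
      + mH * int (Wlt h s) + mH * (\<Sum>j\<in>Jhigh. int (sum_list j))"
    unfolding deltaH_def Cle_eq Clt_eq Wle_eq by (simp add: of_nat_sum algebra_simps)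
  with dim_Pert_ge dim_Cod_le show ?thesis by (simp add: algebra_simps)
qed

theorem card_Sols_ge:
  assumes "Sols \<noteq> {}"
  shows "real (q ^ 2) powi (deltaH q h s l mH \<tau> - 1) \<le> real (card Sols)"
proof -
  define Q where "Q = real (q ^ 2)"
  have Q: "Q \<ge> 1" using q_pos by (simp add: Q_def)
  have "Q ^ dim_Pert = real (card Pert)" by (simp add: Q_def card_Pert)
  also have "\<dots> \<le> real (card Cod * card Sols)"
    using card_Pert_le card_Adm_le_card_Sols[OF assms] by (meson le_trans mult_le_mono2 of_nat_le_iff)
  also have "\<dots> \<le> Q ^ dim_Cod * real (card Sols)"
    using card_Cod_le by (simp add: Q_def mult_right_mono flip: of_nat_power of_nat_le_iff)
  finally have "Q powi (int dim_Pert - int dim_Cod) \<le> real (card Sols)"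
    using Q by (simp add: power_int_diff divide_le_eq mult.commute)
  then show ?thesis
    using power_int_increasing[OF deltaH_le Q] by (simp add: Q_def)
qed

end

theorem lemma6:
  fixes q h s l \<tau> :: nat and mH :: int
    and Rv :: "nat \<Rightarrow> 'a::{field,finite} poly poly"
    and Pt :: "nat \<Rightarrow> 'a \<times> 'a" and r :: "nat \<Rightarrow> nat \<Rightarrow> 'a"
  assumes q_pp: "\<exists>p k. prime p \<and> k \<ge> 1 \<and> q = p ^ k"
    and card_F: "card (UNIV :: 'a set) = q ^ 2"
    and h_pos: "h \<ge> 1"
    and mH_lo: "2 * (int (genusH q) - 1) < mH" and mH_hi: "mH < int (q ^ 3)"
    and pts: "bij_betw Pt {1..q ^ 3} (hermitian_points q)"
    and R_in: "\<forall>\<mu> < h. inR q (Rv \<mu>)"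
    and R_deg: "\<forall>\<mu> < h. Rv \<mu> \<noteq> 0 \<longrightarrow> degH q (Rv \<mu>) < q ^ 3 + 2 * genusH q"
    and R_interp: "\<forall>\<mu> < h. \<forall>j \<in> {1..q ^ 3}.
                     evalR (Rv \<mu>) (fst (Pt j)) (snd (Pt j)) = r \<mu> j"
    and params: "\<tau> \<ge> 1" "l \<ge> 1" "s \<ge> 1" "s \<le> l"
    and bound: "int \<tau> + int l * mH < int s * int (q ^ 3)"
    and exists: "solutions_of_degree q h s l mH Rv \<tau> \<noteq> {}"
  shows "real (card (solutions_of_degree q h s l mH Rv \<tau>))
           \<ge> real (q ^ 2) powi (deltaH q h s l mH \<tau> - 1)"
proof -
  obtain p k where pk: "prime p" "k \<ge> 1" "q = p ^ k" using q_pp by blast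
  have "2 \<le> p" using pk(1) by (rule prime_ge_2_nat)
  moreover have "p \<le> p ^ k" using pk(2) calculation by (simp add: self_le_power)
  ultimately have "q \<ge> 2" using pk(3) by linarith
  then interpret hermitian_problem q h s l \<tau> mH Rv
    using card_F mH_lo mH_hi R_in R_deg params by unfold_locales auto
  show ?thesis using card_Sols_ge exists by (simp add: Sols_def)
qed

end
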